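(* An incentive compatible mechanism $(f,p)$ is individually rational if and only if $p(0,1)\le 0$.
   Context: An agent has private type $(v,k)\in V\times K$, $V=[0,1]$, $K=(0,1]$, and from an outcome $(a_1,a_2,t)$ with $a_1,a_2\in[0,1]$ and $t\in\mathbb{R}$ (payment by the agent) gets utility $U_{(v,k)}(a_1,a_2,t)=v\min\{a_1/k,a_2\}-t$. A mechanism is a pair $(f,p)$ with $f=(f_1,f_2):V\times K\to[0,1]^2$, $p:V\times K\to\mathbb{R}$. It is incentive compatible if $U_{(v,k)}(f(v,k),p(v,k))\ge U_{(v,k)}(f(v',k'),p(v',k'))$ for all types $(v,k),(v',k')$, and individually rational if $U_{(v,k)}(f(v,k),p(v,k))\ge0$ for all $(v,k)$. *)

theory Defs
  imports Complex_Main
begin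

definition typesV :: "real set" where "typesV = {0..1}"
definition typesK :: "real set" where "typesK = {0<..1}"

definition util :: "real \<Rightarrow> real \<Rightarrow> real \<Rightarrow> real \<Rightarrow> real \<Rightarrow> real" where
  "util v k a1 a2 t = v * min (a1 / k) a2 - t"

definition mechanism :: "(real \<Rightarrow> real \<Rightarrow> real) \<Rightarrow> (real \<Rightarrow> real \<Rightarrow> real) \<Rightarrow> bool" where
  "mechanism f1 f2 = (\<forall>v\<in>typesV. \<forall>k\<in>typesK.
      f1 v k \<in> {0..1} \<and> f2 v k \<in> {0..1})"

definition incentive_compatible ::
  "(real \<Rightarrow> real \<Rightarrow> real) \<Rightarrow> (real \<Rightarrow> real \<Rightarrow> real) \<Rightarrow> (real \<Rightarrow> real \<Rightarrow> real) \<Rightarrow> bool" where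
  "incentive_compatible f1 f2 p = (\<forall>v\<in>typesV. \<forall>k\<in>typesK. \<forall>v'\<in>typesV. \<forall>k'\<in>typesK.
      util v k (f1 v k) (f2 v k) (p v k) \<ge> util v k (f1 v' k') (f2 v' k') (p v' k'))"

definition individually_rational ::
  "(real \<Rightarrow> real \<Rightarrow> real) \<Rightarrow> (real \<Rightarrow> real \<Rightarrow> real) \<Rightarrow> (real \<Rightarrow> real \<Rightarrow> real) \<Rightarrow> bool" where
  "individually_rational f1 f2 p = (\<forall>v\<in>typesV. \<forall>k\<in>typesK.
      util v k (f1 v k) (f2 v k) (p v k) \<ge> 0)"

end

theory Submission
  imports Defs
begin

(* The type (0,1) values every outcome at zero, so individual rationality at (0,1) says exactly
   p(0,1) \<le> 0. Conversely, any type may report (0,1); its valuation of that allocation is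
   nonnegative, so incentive compatibility gives it utility at least -p(0,1) \<ge> 0. *)

lemma zero_mem_typesV: "0 \<in> typesV"
  by (simp add: typesV_def)

lemma one_mem_typesK: "1 \<in> typesK"
  by (simp add: typesK_def)

lemma util_zero_value: "util 0 k a1 a2 t = - t"
  by (simp add: util_def)

lemma util_ge_neg_payment:
  assumes "v \<ge> 0" and "k > 0" and "a1 \<ge> 0" and "a2 \<ge> 0"
  shows "util v k a1 a2 t \<ge> - t"
proof -
  have "min (a1 / k) a2 \<ge> 0"
    using assms by simp
  then show ?thesis
    using \<open>v \<ge> 0\<close> by (simp add: util_def)
qed

lemma incentive_compatibleD:
  assumes "incentive_compatible f1 f2 p"
    and "v \<in> typesV" "k \<in> typesK" "v' \<in> typesV" "k' \<in> typesK"
  shows "util v k (f1 v' k') (f2 v' k') (p v' k') \<le> util v k (f1 v k) (f2 v k) (p v k)"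
  using assms unfolding incentive_compatible_def by blast

theorem lemma2:
  fixes f1 f2 p :: "real \<Rightarrow> real \<Rightarrow> real"
  assumes "mechanism f1 f2"
    and "incentive_compatible f1 f2 p"
  shows "individually_rational f1 f2 p \<longleftrightarrow> p 0 1 \<le> 0"
proof
  assume "individually_rational f1 f2 p"
  then have "util 0 1 (f1 0 1) (f2 0 1) (p 0 1) \<ge> 0"
    using zero_mem_typesV one_mem_typesK unfolding individually_rational_def by blast
  then show "p 0 1 \<le> 0"
    by (simp add: util_zero_value)
next
  assume "p 0 1 \<le> 0"
  have alloc: "f1 0 1 \<ge> 0" "f2 0 1 \<ge> 0"
    using assms(1) zero_mem_typesV one_mem_typesK unfolding mechanism_def by auto
  show "individually_rational f1 f2 p"
    unfolding individually_rational_def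
  proof (intro ballI)
    fix v k assume v: "v \<in> typesV" and k: "k \<in> typesK"
    then have "v \<ge> 0" "k > 0"
      by (auto simp: typesV_def typesK_def)
    then have "util v k (f1 0 1) (f2 0 1) (p 0 1) \<ge> 0"
      using util_ge_neg_payment[OF \<open>v \<ge> 0\<close> \<open>k > 0\<close> alloc, of "p 0 1"] \<open>p 0 1 \<le> 0\<close>
      by linarith
    also have "\<dots> \<le> util v k (f1 v k) (f2 v k) (p v k)"
      using incentive_compatibleD[OF assms(2) v k zero_mem_typesV one_mem_typesK] .
    finally show "util v k (f1 v k) (f2 v k) (p v k) \<ge> 0" .
  qed
qed

end
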